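(* Let $f:[0,1]^n\to[0,1]$ be continuous and such that $f$ and $1-f$ are polynomially bounded. Then there exists a function $g:[0,1]^n\to[0,1]$ that is implementable by a finite Bernoulli factory such that the function $\tilde f(p)=\frac43\left(f(p)-\frac14 g(p)\right)$ maps $[0,1]^n$ into $[0,1]$, is continuous, and both $\tilde f$ and $1-\tilde f$ are polynomially bounded.
   Context: A (multiparameter) Bernoulli factory with input $(p_1,\dots,p_n)$ is a (possibly infinite) rooted binary tree in which every node has either $2$ children or $0$ children (leaf). Each internal node is labelled either by an index $i\in[n]$ or by a constant $c\in(0,1)$; each leaf is labelled $0$ or $1$. To execute it with coins $p\in[0,1]^n$, start at the root; at a node labelled $i$ draw a fresh independent Bernoulli($p_i$) sample, at a node labelled $c$ a fresh independent Bernoulli($c$) sample; move to the child corresponding to the outcome; upon reaching a leaf output its label. A function $g$ is implementable by a factory if for every $p\in[0,1]^n$ a leaf is reached almost surely and the output is $1$ with probability exactly $g(p)$. The factory is finite if its tree has finitely many nodes. For a partition $[n]=A\sqcup S\sqcup B$, the open face is $F_{A,S,B}=\{p\in[0,1]^n: p_i=0\ (i\in A),\ 0<p_i<1\ (i\in S),\ p_i=1\ (i\in B)\}$. For $T\subseteq[n]$, $p^T=\prod_{i\in T}p_i$, $(1-p)^T=\prod_{i\in T}(1-p_i)$. A function $h:[0,1]^n\to[0,1]$ is polynomially bounded if there exist an integer $m\ge0$ and a real $c>0$ such that for every open face $F_{A,S,B}$ on which $h$ is not identically $0$, $h(p)\ge c\left((1-p)^A p^S(1-p)^S p^B\right)^m$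 for all $p\in[0,1]^n$. *)

theory Defs
  imports "HOL-Analysis.Analysis"
begin

text \<open>Internal nodes are labelled
by a coin index (an element of the finite index type 'i, playing the role of [n]) or by a
constant c; leaves are labelled 0/1 (False/True). Since HOL datatype values are finite,
every value of this type is a finite tree. The first child is taken on outcome 1, the
second on outcome 0.\<close>

datatype 'i factory =
    Leaf bool
  | Coin 'i "'i factory" "'i factory"
  | Const real "'i factory" "'i factory"

fun valid_factory :: "'i factory \<Rightarrow> bool" where
  "valid_factory (Leaf b) = True"
| "valid_factory (Coin i t1 t0) = (valid_factory t1 \<and> valid_factory t0)"
| "valid_factory (Const c t1 t0) = (0 < c \<and> c < 1 \<and> valid_factory t1 \<and> valid_factory t0)"

fun factory_prob :: "'i factory \<Rightarrow> (real ^ 'i) \<Rightarrow> real" where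
  "factory_prob (Leaf b) p = (if b then 1 else 0)"
| "factory_prob (Coin i t1 t0) p = p $ i * factory_prob t1 p + (1 - p $ i) * factory_prob t0 p"
| "factory_prob (Const c t1 t0) p = c * factory_prob t1 p + (1 - c) * factory_prob t0 p"

definition unit_cube :: "(real ^ 'n::finite) set" where
  "unit_cube = {p. \<forall>i. 0 \<le> p $ i \<and> p $ i \<le> 1}"

definition finite_factory_implementable :: "((real ^ 'n::finite) \<Rightarrow> real) \<Rightarrow> bool" where
  "finite_factory_implementable g \<longleftrightarrow>
     (\<exists>t::'n factory. valid_factory t \<and> (\<forall>p\<in>unit_cube. g p = factory_prob t p))"

definition open_face :: "'n set \<Rightarrow> 'n set \<Rightarrow> 'n set \<Rightarrow> (real ^ 'n::finite) set" where
  "open_face A S B = {p. (\<forall>i\<in>A. p $ i = 0) \<and> (\<forall>i\<in>S. 0 < p $ i \<and> p $ i < 1) \<and> (\<forall>i\<in>B. p $ i = 1)}"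

definition is_partition3 :: "'n set \<Rightarrow> 'n set \<Rightarrow> 'n set \<Rightarrow> bool" where
  "is_partition3 A S B \<longleftrightarrow> A \<inter> S = {} \<and> A \<inter> B = {} \<and> S \<inter> B = {} \<and> A \<union> S \<union> B = UNIV"

definition poly_bounded :: "((real ^ 'n::finite) \<Rightarrow> real) \<Rightarrow> bool" where
  "poly_bounded h \<longleftrightarrow>
     (\<exists>(m::nat) (c::real). c > 0 \<and>
        (\<forall>A S B. is_partition3 A S B \<longrightarrow> (\<exists>q\<in>open_face A S B. h q \<noteq> 0) \<longrightarrow>
           (\<forall>p\<in>unit_cube.
              h p \<ge> c * ((\<Prod>i\<in>A. 1 - p $ i) * (\<Prod>i\<in>S. p $ i) * (\<Prod>i\<in>S. 1 - p $ i)
                          * (\<Prod>i\<in>B. p $ i)) ^ m)))"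

end

theory Submission
  imports Defs
begin

text \<open>The factory g flips every coin N times and then a coin of bias ramp (f (k / N)), where k is
  the vector of head counts and ramp t = max 0 (min 1 (2 t - 1/2)); so g is the multivariate
  Bernstein polynomial of degree N of ramp \<circ> f. It suffices to get g \<le> 2 f and
  1 - g \<le> 2 (1 - f): then ft \<ge> 2/3 f and 1 - ft \<ge> 2/3 (1 - f), which transfers polynomial
  boundedness, and by the symmetry 1 - ramp t = ramp (1 - t) the second bound is the first one
  for 1 - f. Where f p is not small, the Chebyshev estimate for Bernstein polynomials gives
  g p \<le> ramp (f p) + \<kappa>, which suffices because ramp vanishes on [0, 1/4] and
  ramp t \<le> t on [0, 1/2].

  Near the zeros of f, take the least t among 0, 1/2 and the distances min (p_i, 1 - p_i) such
  that f vanishes on the face reached by rounding to 0 or 1 the coordinates of p within t of the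
  boundary. Grid points close to that face have coefficient 0, and the others have a count
  at least R steps beyond the rounded value in some coordinate, so g p \<le> n 2^N t^R by a
  binomial tail bound. Rounding at the previous distance instead gives a face on which f is
  not identically zero and on which p has weight at least t^(4n), so f p \<ge> c t^M by
  polynomial boundedness. With N = L R and R large, n 2^N t^R \<le> 2 c t^M.\<close>

section \<open>Factories for Bernstein polynomials\<close>

lemma convex_comb_in_unit_interval:
  fixes a x y :: real
  assumes "a \<in> {0..1}" "x \<in> {0..1}" "y \<in> {0..1}"
  shows "a * x + (1 - a) * y \<in> {0..1}"
  using assms convex_bound_le[of x 1 y a "1 - a"] by auto

definition coin_factory :: "real \<Rightarrow> 'n factory" where
  "coin_factory c =
     (if c \<le> 0 then Leaf False else if 1 \<le> c then Leaf True else Const c (Leaf True) (Leaf False))"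

lemma valid_coin_factory: "valid_factory (coin_factory c)"
  by (simp add: coin_factory_def)

lemma factory_prob_coin_factory: "c \<in> {0..1} \<Longrightarrow> factory_prob (coin_factory c) p = c"
  by (auto simp: coin_factory_def)

lemma factory_prob_in_unit_interval:
  assumes "valid_factory t" "p \<in> unit_cube"
  shows "factory_prob t p \<in> {0..1}"
  using assms(1)
proof (induction t)
  case (Leaf b)
  then show ?case by simp
next
  case (Coin i t1 t0)
  moreover have "p $ i \<in> {0..1}"
    using assms(2) by (simp add: unit_cube_def)
  ultimately show ?case
    by (auto intro!: convex_comb_in_unit_interval simp del: atLeastAtMost_iff)
next
  case (Const c t1 t0)
  moreover have "c \<in> {0..1}"
    using Const by simp
  ultimately show ?case
    by (auto intro!: convex_comb_in_unit_interval simp del: atLeastAtMost_iff)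
qed

lemma continuous_on_factory_prob: "continuous_on S (factory_prob t)"
  by (induction t) (simp_all add: continuous_intros)

fun binomial_factory :: "'n \<Rightarrow> nat \<Rightarrow> (nat \<Rightarrow> 'n factory) \<Rightarrow> 'n factory" where
  "binomial_factory i 0 cont = cont 0"
| "binomial_factory i (Suc N) cont =
     Coin i (binomial_factory i N (\<lambda>k. cont (Suc k))) (binomial_factory i N cont)"

lemma valid_binomial_factory:
  "(\<And>k. valid_factory (cont k)) \<Longrightarrow> valid_factory (binomial_factory i N cont)"
  by (induction N arbitrary: cont) auto

lemma Bernstein_Suc_Suc:
  "Bernstein (Suc N) (Suc k) x = x * Bernstein N k x + (1 - x) * Bernstein N (Suc k) x"
proof (cases "k < N")
  case True
  then have "N - k = Suc (N - Suc k)" by simp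
  then show ?thesis by (simp add: Bernstein_def algebra_simps)
next
  case False
  then consider "k = N" | "N < k" by linarith
  then show ?thesis
  proof cases
    case 1
    then show ?thesis by (simp add: Bernstein_def)
  next
    case 2
    then show ?thesis
      by (simp add: Bernstein_def binomial_eq_0 del: binomial_Suc_Suc)
  qed
qed

lemma sum_Bernstein_Suc:
  "(\<Sum>k\<le>Suc N. Bernstein (Suc N) k x * a k)
     = x * (\<Sum>k\<le>N. Bernstein N k x * a (Suc k)) + (1 - x) * (\<Sum>k\<le>N. Bernstein N k x * a k)"
proof -
  have step: "(\<Sum>k\<le>N. Bernstein (Suc N) (Suc k) x * a (Suc k))
      = x * (\<Sum>k\<le>N. Bernstein N k x * a (Suc k)) + (1 - x) * (\<Sum>k\<le>N. Bernstein N (Suc k) x * a (Suc k))"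
    by (simp add: Bernstein_Suc_Suc distrib_right sum.distrib sum_distrib_left mult.assoc)
  have "(\<Sum>k\<le>N. Bernstein N k x * a k) = (\<Sum>k\<le>Suc N. Bernstein N k x * a k)"
    by (simp add: Bernstein_def)
  also have "\<dots> = Bernstein N 0 x * a 0 + (\<Sum>k\<le>N. Bernstein N (Suc k) x * a (Suc k))"
    by (rule sum.atMost_Suc_shift)
  finally have low: "(\<Sum>k\<le>N. Bernstein N k x * a k)
      = Bernstein N 0 x * a 0 + (\<Sum>k\<le>N. Bernstein N (Suc k) x * a (Suc k))" .
  have "(\<Sum>k\<le>Suc N. Bernstein (Suc N) k x * a k)
      = (1 - x) * Bernstein N 0 x * a 0 + (\<Sum>k\<le>N. Bernstein (Suc N) (Suc k) x * a (Suc k))"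
    by (subst sum.atMost_Suc_shift) (simp add: Bernstein_def)
  then show ?thesis
    unfolding step low by (simp add: algebra_simps)
qed

lemma factory_prob_binomial_factory:
  "factory_prob (binomial_factory i N cont) p
     = (\<Sum>k\<le>N. Bernstein N k (p $ i) * factory_prob (cont k) p)"
proof (induction N arbitrary: cont)
  case 0
  then show ?case by (simp add: Bernstein_def)
next
  case (Suc N)
  then show ?case by (simp only: binomial_factory.simps factory_prob.simps sum_Bernstein_Suc)
qed

fun grid_factory :: "'n list \<Rightarrow> nat \<Rightarrow> ('n \<Rightarrow> nat) \<Rightarrow> (('n \<Rightarrow> nat) \<Rightarrow> real) \<Rightarrow> 'n factory" where
  "grid_factory [] N k h = coin_factory (h k)"
| "grid_factory (i # is) N k h = binomial_factory i N (\<lambda>j. grid_factory is N (k(i := j)) h)"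

lemma valid_grid_factory: "valid_factory (grid_factory is N k h)"
  by (induction "is" arbitrary: k) (auto intro: valid_binomial_factory valid_coin_factory)

lemma factory_prob_grid_factory_Cons:
  "factory_prob (grid_factory (i # is) N k h) p
     = (\<Sum>j\<le>N. Bernstein N j (p $ i) * factory_prob (grid_factory is N (k(i := j)) h) p)"
  by (simp add: factory_prob_binomial_factory)

lemma factory_prob_grid_factory_compl:
  assumes "\<And>k. h k \<in> {0..1}"
  shows "factory_prob (grid_factory is N k (\<lambda>k. 1 - h k)) p = 1 - factory_prob (grid_factory is N k h) p"
proof (induction "is" arbitrary: k)
  case Nil
  then show ?case
    using assms by (simp add: factory_prob_coin_factory)
next
  case (Cons i "is")
  have "factory_prob (grid_factory (i # is) N k (\<lambda>k. 1 - h k)) p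
      = (\<Sum>j\<le>N. Bernstein N j (p $ i) * (1 - factory_prob (grid_factory is N (k(i := j)) h) p))"
    by (simp only: factory_prob_grid_factory_Cons Cons)
  also have "\<dots> = (\<Sum>j\<le>N. Bernstein N j (p $ i))
      - (\<Sum>j\<le>N. Bernstein N j (p $ i) * factory_prob (grid_factory is N (k(i := j)) h) p)"
    by (simp add: algebra_simps sum_subtractf)
  finally show ?case
    by (simp only: factory_prob_grid_factory_Cons sum_Bernstein)
qed

text \<open>A union bound: grid points with a bad count are charged to the Bernstein mass of the bad
  counts of a single coin.\<close>
lemma factory_prob_grid_factory_le:
  assumes "distinct is" "p \<in> unit_cube" "0 \<le> e" "\<And>k. h k \<in> {0..1}" "\<forall>i. k0 i \<le> N"
    and "\<And>k. \<forall>i. k i \<le> N \<Longrightarrow> \<forall>i. i \<notin> set is \<longrightarrow> k i = k0 i \<Longrightarrow> \<forall>i\<in>set is. \<not> bad i (k i)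
           \<Longrightarrow> h k \<le> e"
  shows "factory_prob (grid_factory is N k0 h) p
           \<le> e + (\<Sum>i\<in>set is. \<Sum>k\<in>{k\<in>{..N}. bad i k}. Bernstein N k (p $ i))"
  using assms(1,5,6)
proof (induction "is" arbitrary: k0)
  case Nil
  then have "h k0 \<le> e"
    using Nil.prems(3)[of k0] by simp
  then show ?case
    using assms(4) by (simp add: factory_prob_coin_factory)
next
  case (Cons i "is")
  have p01: "p $ j \<in> {0..1}" for j
    using assms(2) by (simp add: unit_cube_def)
  define S where "S = (\<Sum>i\<in>set is. \<Sum>k\<in>{k\<in>{..N}. bad i k}. Bernstein N k (p $ i))"
  have "0 \<le> S"
    unfolding S_def using p01 by (intro sum_nonneg) (simp add: Bernstein_nonneg)
  have i: "i \<notin> set is" "distinct is"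
    using Cons.prems(1) by auto
  have branch: "factory_prob (grid_factory is N (k0(i := j)) h) p \<le> e + S + (if bad i j then 1 else 0)"
    if "j \<le> N" for j
  proof (cases "bad i j")
    case True
    have "factory_prob (grid_factory is N (k0(i := j)) h) p \<le> 1"
      using factory_prob_in_unit_interval[OF valid_grid_factory assms(2)] by simp
    then show ?thesis
      using True \<open>0 \<le> S\<close> assms(3) by simp
  next
    case False
    have "factory_prob (grid_factory is N (k0(i := j)) h) p \<le> e + S"
      unfolding S_def
    proof (rule Cons.IH[OF i(2)])
      show "\<forall>l. (k0(i := j)) l \<le> N"
        using Cons.prems(2) that by simp
      fix k
      assume k: "\<forall>l. k l \<le> N" "\<forall>l. l \<notin> set is \<longrightarrow> k l = (k0(i := j)) l"
        "\<forall>l\<in>set is. \<not> bad l (k l)"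
      have "k i = j"
        using k(2) i(1) by simp
      then show "h k \<le> e"
        using Cons.prems(3)[of k] k False by auto
    qed
    then show ?thesis
      using False by simp
  qed
  have "factory_prob (grid_factory (i # is) N k0 h) p
      \<le> (\<Sum>j\<le>N. (e + S + (if bad i j then 1 else 0)) * Bernstein N j (p $ i))"
    unfolding factory_prob_grid_factory_Cons mult.commute[of "Bernstein _ _ _"]
    using p01 by (intro sum_mono mult_right_mono branch) (simp_all add: Bernstein_nonneg)
  also have "\<dots> = (\<Sum>j\<le>N. (e + S) * Bernstein N j (p $ i)
      + (if bad i j then Bernstein N j (p $ i) else 0))"
    by (intro sum.cong) (simp_all add: distrib_right)
  also have "\<dots> = e + S + (\<Sum>j\<in>{j\<in>{..N}. bad i j}. Bernstein N j (p $ i))"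
    by (simp add: sum.distrib flip: sum_distrib_left sum.inter_filter)
  also have "\<dots> = e + (\<Sum>i\<in>set (i # is). \<Sum>k\<in>{k\<in>{..N}. bad i k}. Bernstein N k (p $ i))"
    using i(1) by (simp add: S_def)
  finally show ?case .
qed

definition coords :: "'n::finite list" where
  "coords = (SOME xs. set xs = UNIV \<and> distinct xs)"

lemma set_coords: "set coords = UNIV" and distinct_coords: "distinct coords"
proof -
  obtain xs :: "'n::finite list" where "set xs = UNIV \<and> distinct xs"
    using finite_distinct_list[of "UNIV :: 'n set"] by auto
  then have "set (coords :: 'n list) = UNIV \<and> distinct (coords :: 'n list)"
    unfolding coords_def by (rule someI)
  then show "set (coords :: 'n list) = UNIV" "distinct (coords :: 'n list)"
    by simp_all
qed

text \<open>Flipping each coin N times and then a coin with bias h k, where k counts the heads,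
  realises the multivariate Bernstein polynomial of degree N with coefficients h k.\<close>
definition bernstein_factory :: "nat \<Rightarrow> (('n::finite \<Rightarrow> nat) \<Rightarrow> real) \<Rightarrow> 'n factory" where
  "bernstein_factory N h = grid_factory coords N (\<lambda>_. 0) h"

lemma valid_bernstein_factory: "valid_factory (bernstein_factory N h)"
  by (simp add: bernstein_factory_def valid_grid_factory)

lemma factory_prob_bernstein_factory_compl:
  "(\<And>k. h k \<in> {0..1}) \<Longrightarrow>
     factory_prob (bernstein_factory N (\<lambda>k. 1 - h k)) p = 1 - factory_prob (bernstein_factory N h) p"
  unfolding bernstein_factory_def by (rule factory_prob_grid_factory_compl)

lemma factory_prob_bernstein_factory_le:
  fixes p :: "real ^ 'n::finite"
  assumes "p \<in> unit_cube" "0 \<le> e" "\<And>k. h k \<in> {0..1}"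
    and "\<And>k. \<forall>i. k i \<le> N \<Longrightarrow> \<forall>i. \<not> bad i (k i) \<Longrightarrow> h k \<le> e"
  shows "factory_prob (bernstein_factory N h) p
           \<le> e + (\<Sum>i\<in>UNIV. \<Sum>k\<in>{k\<in>{..N}. bad i k}. Bernstein N k (p $ i))"
  using factory_prob_grid_factory_le[OF distinct_coords assms(1-3), of "\<lambda>_. 0" N bad]
    assms(4) by (simp add: bernstein_factory_def set_coords)

section \<open>Bernstein polynomial estimates\<close>

lemma sum_Bernstein_variance:
  assumes "0 < N"
  shows "(\<Sum>k\<le>N. (x - k/N)\<^sup>2 * Bernstein N k x) = x * (1 - x) / N"
proof -
  have *: "\<And>a b x::real. (a - b)\<^sup>2 * x = a * (a - 1) * x + (1 - 2 * b) * a * x + b * b * x"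
    by (simp add: algebra_simps power2_eq_square)
  have "(\<Sum>k\<le>N. (k - N * x)\<^sup>2 * Bernstein N k x)
      = (\<Sum>k\<le>N. real k * (real k - 1) * Bernstein N k x) + (1 - 2 * (N * x)) * (\<Sum>k\<le>N. k * Bernstein N k x)
        + (N * x) * (N * x) * (\<Sum>k\<le>N. Bernstein N k x)"
    by (simp only: * sum.distrib sum_distrib_left mult.assoc)
  also have "\<dots> = N * x * (1 - x)"
    by (simp only: sum_kk_Bernstein sum_k_Bernstein sum_Bernstein)
      (simp add: algebra_simps power2_eq_square)
  finally have "(\<Sum>k\<le>N. (k - N * x)\<^sup>2 * Bernstein N k x) / N^2 = x * (1 - x) / N"
    by (simp add: power2_eq_square)
  then show ?thesis
    using assms by (simp add: sum_divide_distrib field_split_simps power2_commute)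
qed

lemma Bernstein_far_sum_le:
  assumes "0 < d" "x \<in> {0..1}" "0 < N"
  shows "(\<Sum>k\<in>{k\<in>{..N}. d \<le> \<bar>real k / real N - x\<bar>}. Bernstein N k x) \<le> 1 / (4 * real N * d\<^sup>2)"
proof -
  have x: "0 \<le> x" "x \<le> 1"
    using assms(2) by auto
  have "(\<Sum>k\<in>{k\<in>{..N}. d \<le> \<bar>real k / real N - x\<bar>}. Bernstein N k x)
      \<le> (\<Sum>k\<in>{k\<in>{..N}. d \<le> \<bar>real k / real N - x\<bar>}. (x - k/N)\<^sup>2 / d\<^sup>2 * Bernstein N k x)"
  proof (rule sum_mono)
    fix k
    assume "k \<in> {k\<in>{..N}. d \<le> \<bar>real k / real N - x\<bar>}"
    then have "\<bar>d\<bar> \<le> \<bar>x - k/N\<bar>"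
      using assms(1) by (simp add: abs_minus_commute)
    then have "d\<^sup>2 \<le> (x - k/N)\<^sup>2"
      by (simp add: abs_le_square_iff)
    then have "1 \<le> (x - k/N)\<^sup>2 / d\<^sup>2"
      using assms(1) by simp
    then show "Bernstein N k x \<le> (x - k/N)\<^sup>2 / d\<^sup>2 * Bernstein N k x"
      using mult_right_mono[OF \<open>1 \<le> _\<close> Bernstein_nonneg[OF x]] by simp
  qed
  also have "\<dots> \<le> (\<Sum>k\<le>N. (x - k/N)\<^sup>2 / d\<^sup>2 * Bernstein N k x)"
    using x by (intro sum_mono2) (auto simp: Bernstein_nonneg)
  also have "\<dots> = x * (1 - x) / N / d\<^sup>2"
    by (simp add: sum_Bernstein_variance[OF assms(3), symmetric] sum_divide_distrib)
  also have "\<dots> \<le> 1 / (4 * real N * d\<^sup>2)"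
  proof -
    have "x * (1 - x) \<le> 1/4"
      using zero_le_power2[of "x - 1/2"] by (simp add: power2_eq_square algebra_simps)
    then have "x * (1 - x) * (1 / (real N * d\<^sup>2)) \<le> 1/4 * (1 / (real N * d\<^sup>2))"
      by (rule mult_right_mono) simp
    then show ?thesis
      by simp
  qed
  finally show ?thesis .
qed

lemma Bernstein_sum_le_two_power:
  assumes "K \<subseteq> {..N}" "x \<in> {0..1}" "0 \<le> b" "\<And>k. k \<in> K \<Longrightarrow> x ^ k * (1 - x) ^ (N - k) \<le> b"
  shows "(\<Sum>k\<in>K. Bernstein N k x) \<le> 2 ^ N * b"
proof -
  have "(\<Sum>k\<in>K. Bernstein N k x) \<le> (\<Sum>k\<in>K. real (N choose k) * b)"
  proof (rule sum_mono)
    fix k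
    assume "k \<in> K"
    then have "real (N choose k) * (x ^ k * (1 - x) ^ (N - k)) \<le> real (N choose k) * b"
      using assms(4) by (intro mult_left_mono) auto
    then show "Bernstein N k x \<le> real (N choose k) * b"
      by (simp add: Bernstein_def mult.assoc)
  qed
  also have "\<dots> \<le> (\<Sum>k\<le>N. real (N choose k) * b)"
    using assms(1,3) by (intro sum_mono2) auto
  also have "\<dots> = 2 ^ N * b"
    by (simp add: sum_distrib_right[symmetric] of_nat_sum[symmetric] choose_row_sum del: of_nat_sum)
  finally show ?thesis .
qed

lemma Bernstein_upper_tail_le:
  assumes "x \<in> {0..1}" "x \<le> t"
  shows "(\<Sum>k\<in>{k\<in>{..N}. R \<le> k}. Bernstein N k x) \<le> 2 ^ N * t ^ R"
proof (rule Bernstein_sum_le_two_power)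
  fix k
  assume "k \<in> {k\<in>{..N}. R \<le> k}"
  then have "x ^ k * (1 - x) ^ (N - k) \<le> x ^ R * 1"
    using assms by (intro mult_mono power_decreasing power_le_one) auto
  also have "\<dots> \<le> t ^ R"
    using assms by (simp add: power_mono)
  finally show "x ^ k * (1 - x) ^ (N - k) \<le> t ^ R" .
qed (use assms in auto)

lemma Bernstein_lower_tail_le:
  assumes "x \<in> {0..1}" "1 - x \<le> t"
  shows "(\<Sum>k\<in>{k\<in>{..N}. k + R \<le> N}. Bernstein N k x) \<le> 2 ^ N * t ^ R"
proof (rule Bernstein_sum_le_two_power)
  fix k
  assume "k \<in> {k\<in>{..N}. k + R \<le> N}"
  then have "x ^ k * (1 - x) ^ (N - k) \<le> 1 * (1 - x) ^ R"
    using assms by (intro mult_mono power_decreasing power_le_one) auto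
  also have "\<dots> \<le> t ^ R"
    using assms by (simp add: power_mono)
  finally show "x ^ k * (1 - x) ^ (N - k) \<le> t ^ R" .
qed (use assms in auto)

section \<open>Faces and polynomial boundedness\<close>

definition face_weight :: "'n set \<Rightarrow> 'n set \<Rightarrow> 'n set \<Rightarrow> real ^ 'n::finite \<Rightarrow> real" where
  "face_weight A S B p = (\<Prod>i\<in>A. 1 - p $ i) * (\<Prod>i\<in>S. p $ i) * (\<Prod>i\<in>S. 1 - p $ i) * (\<Prod>i\<in>B. p $ i)"

lemma poly_boundedE:
  assumes "poly_bounded h"
  obtains c m where "0 < c"
    "\<And>A S B p. is_partition3 A S B \<Longrightarrow> \<exists>q\<in>open_face A S B. h q \<noteq> 0 \<Longrightarrow> p \<in> unit_cube
       \<Longrightarrow> c * face_weight A S B p ^ m \<le> h p"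
  using assms unfolding poly_bounded_def face_weight_def by blast

lemma poly_boundedI:
  assumes "0 < c"
    "\<And>A S B p. is_partition3 A S B \<Longrightarrow> \<exists>q\<in>open_face A S B. h q \<noteq> 0 \<Longrightarrow> p \<in> unit_cube
       \<Longrightarrow> c * face_weight A S B p ^ m \<le> h p"
  shows "poly_bounded h"
  using assms unfolding poly_bounded_def face_weight_def by blast

lemma open_face_subset_unit_cube:
  assumes "is_partition3 A S B"
  shows "open_face A S B \<subseteq> unit_cube"
proof
  fix q
  assume q: "q \<in> open_face A S B"
  have "0 \<le> q $ i \<and> q $ i \<le> 1" for i
  proof -
    have "i \<in> A \<or> i \<in> S \<or> i \<in> B"
      using assms unfolding is_partition3_def by blast
    then show ?thesis
      using q unfolding open_face_def by auto
  qed
  then show "q \<in> unit_cube"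
    by (simp add: unit_cube_def)
qed

lemma poly_bounded_of_lower_bound:
  fixes f u :: "real ^ 'n::finite \<Rightarrow> real"
  assumes "poly_bounded f" "0 < a"
    and zero: "\<And>q. q \<in> unit_cube \<Longrightarrow> f q = 0 \<Longrightarrow> u q = 0"
    and lower: "\<And>p. p \<in> unit_cube \<Longrightarrow> a * f p \<le> u p"
  shows "poly_bounded u"
proof -
  from assms(1) obtain c m where "0 < c" and bound: "\<And>A S B p. is_partition3 A S B \<Longrightarrow>
      \<exists>q\<in>open_face A S B. f q \<noteq> 0 \<Longrightarrow> p \<in> unit_cube \<Longrightarrow> c * face_weight A S B p ^ m \<le> f p"
    by (rule poly_boundedE) (rule that)
  show ?thesis
  proof (rule poly_boundedI)
    show "0 < a * c"
      using \<open>0 < a\<close> \<open>0 < c\<close> by simp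
    fix A S B :: "'n set" and p :: "real ^ 'n"
    assume part: "is_partition3 A S B" and "\<exists>q\<in>open_face A S B. u q \<noteq> 0" and p: "p \<in> unit_cube"
    then have "\<exists>q\<in>open_face A S B. f q \<noteq> 0"
      using zero open_face_subset_unit_cube[OF part] by blast
    then have "c * face_weight A S B p ^ m \<le> f p"
      using bound part p by blast
    then have "a * (c * face_weight A S B p ^ m) \<le> a * f p"
      using \<open>0 < a\<close> by simp
    then show "a * c * face_weight A S B p ^ m \<le> u p"
      using lower[OF p] by simp
  qed
qed

lemma face_weight_ge_power:
  fixes p :: "real ^ 'n::finite"
  assumes s: "s \<in> {0..1}"
    and "\<forall>i\<in>A. s \<le> 1 - p $ i" "\<forall>i\<in>S. s \<le> p $ i \<and> s \<le> 1 - p $ i" "\<forall>i\<in>B. s \<le> p $ i"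
  shows "s ^ (4 * CARD('n)) \<le> face_weight A S B p"
proof -
  have factor: "s ^ CARD('n) \<le> prod g X" if "\<forall>i\<in>X. s \<le> g i" for X :: "'n set" and g
  proof -
    have "s ^ CARD('n) \<le> s ^ card X"
      using s by (intro power_decreasing card_mono) auto
    also have "\<dots> = (\<Prod>i\<in>X. s)"
      by simp
    also have "\<dots> \<le> prod g X"
      using that s by (intro prod_mono) auto
    finally show ?thesis .
  qed
  have "0 \<le> s ^ CARD('n)"
    using s by simp
  moreover have "s ^ CARD('n) \<le> (\<Prod>i\<in>A. 1 - p $ i)" "s ^ CARD('n) \<le> (\<Prod>i\<in>S. p $ i)"
    "s ^ CARD('n) \<le> (\<Prod>i\<in>S. 1 - p $ i)" "s ^ CARD('n) \<le> (\<Prod>i\<in>B. p $ i)"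
    using assms(2-4) by (simp_all add: factor)
  ultimately have "s ^ CARD('n) * s ^ CARD('n) * s ^ CARD('n) * s ^ CARD('n) \<le> face_weight A S B p"
    unfolding face_weight_def by (meson mult_mono mult_nonneg_nonneg order.trans)
  moreover have "s ^ (4 * CARD('n)) = s ^ CARD('n) * s ^ CARD('n) * s ^ CARD('n) * s ^ CARD('n)"
  proof -
    have "4 * CARD('n) = CARD('n) + CARD('n) + CARD('n) + CARD('n)"
      by simp
    then show ?thesis
      by (simp only: power_add)
  qed
  ultimately show ?thesis
    by simp
qed

text \<open>Rounding the coordinates of p that lie within t of 0 or 1 moves p to the face
  with index sets (low_coords p t, mid_coords p t, high_coords p t).\<close>
definition low_coords :: "real ^ 'n \<Rightarrow> real \<Rightarrow> 'n set" where
  "low_coords p t = {i. p $ i \<le> t}"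

definition high_coords :: "real ^ 'n \<Rightarrow> real \<Rightarrow> 'n set" where
  "high_coords p t = {i. 1 - t \<le> p $ i} - low_coords p t"

definition mid_coords :: "real ^ 'n \<Rightarrow> real \<Rightarrow> 'n set" where
  "mid_coords p t = - (low_coords p t \<union> high_coords p t)"

lemma is_partition3_threshold: "is_partition3 (low_coords p t) (mid_coords p t) (high_coords p t)"
  unfolding is_partition3_def mid_coords_def high_coords_def by auto

lemma mid_coords_ge:
  assumes "\<And>i. t' < min (p $ i) (1 - p $ i) \<Longrightarrow> t \<le> min (p $ i) (1 - p $ i)"
    and "i \<in> mid_coords p t'"
  shows "t \<le> p $ i \<and> t \<le> 1 - p $ i"
proof -
  have "t' < min (p $ i) (1 - p $ i)"
    using assms(2) by (auto simp: mid_coords_def high_coords_def low_coords_def)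
  then show ?thesis
    using assms(1) by simp
qed

text \<open>The candidate thresholds are 0, 1/2 and the distances of the coordinates of p to the
  boundary; t is the least of them that is 1/2 or satisfies Z, and t' the one just below it.\<close>
lemma critical_threshold:
  fixes p :: "real ^ 'n::finite" and Z :: "real \<Rightarrow> bool"
  obtains t where "t \<in> {0..1/2}" "t = 1/2 \<or> Z t"
    "t = 0 \<or> (\<exists>t'. \<not> Z t' \<and> t \<le> 1 - t' \<and> (\<forall>i\<in>mid_coords p t'. t \<le> p $ i \<and> t \<le> 1 - p $ i))"
proof -
  define D where "D = ({0, 1/2} \<union> range (\<lambda>i. min (p $ i) (1 - p $ i))) \<inter> {0..1/2}"
  have "finite D" "1/2 \<in> D"
    by (simp_all add: D_def)
  define t where "t = Min {s\<in>D. s = 1/2 \<or> Z s}"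
  have "finite {s\<in>D. s = 1/2 \<or> Z s}" "1/2 \<in> {s\<in>D. s = 1/2 \<or> Z s}"
    using \<open>finite D\<close> \<open>1/2 \<in> D\<close> by simp_all
  then have t: "t \<in> {s\<in>D. s = 1/2 \<or> Z s}"
    unfolding t_def by (metis Min_in empty_iff)
  have t_min: "t \<le> s" if "s \<in> D" "s = 1/2 \<or> Z s" for s
    unfolding t_def using \<open>finite D\<close> that by simp
  have "\<exists>t'. \<not> Z t' \<and> t \<le> 1 - t' \<and> (\<forall>i\<in>mid_coords p t'. t \<le> p $ i \<and> t \<le> 1 - p $ i)"
    if "t \<noteq> 0"
  proof -
    define t' where "t' = Max {s\<in>D. s < t}"
    have "finite {s\<in>D. s < t}"
      using \<open>finite D\<close> by simp
    moreover have "0 \<in> {s\<in>D. s < t}"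
      using that t by (auto simp: D_def)
    ultimately have t': "t' \<in> {s\<in>D. s < t}"
      unfolding t'_def by (metis Max_in empty_iff)
    have t'_max: "s \<le> t'" if "s \<in> D" "s < t" for s
      unfolding t'_def using \<open>finite D\<close> that by simp
    have "t \<le> 1/2"
      using t by (auto simp: D_def)
    then have "\<not> Z t'"
      using t_min[of t'] t' by auto
    moreover have "t \<le> 1 - t'"
      using t t' by (auto simp: D_def)
    moreover have "t \<le> min (p $ i) (1 - p $ i)" if "t' < min (p $ i) (1 - p $ i)" for i
    proof -
      have "min (p $ i) (1 - p $ i) \<le> 1/2" "0 \<le> t'"
        using t' by (auto simp: D_def min_def)
      then have "min (p $ i) (1 - p $ i) \<in> D"
        using that by (simp add: D_def)
      then show ?thesis
        using that t'_max[of "min (p $ i) (1 - p $ i)"] by linarith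
    qed
    ultimately show ?thesis
      using mid_coords_ge by blast
  qed
  then show ?thesis
    using t by (intro that[of t]) (auto simp: D_def)
qed

lemma poly_bounded_threshold_bound:
  fixes f :: "real ^ 'n::finite \<Rightarrow> real"
  assumes "0 < c"
    and bound: "\<And>A S B p. is_partition3 A S B \<Longrightarrow> \<exists>q\<in>open_face A S B. f q \<noteq> 0 \<Longrightarrow> p \<in> unit_cube
       \<Longrightarrow> c * face_weight A S B p ^ m \<le> f p"
    and p: "p \<in> unit_cube"
  obtains t where "t \<in> {0..1/2}"
    "t = 1/2 \<or> (\<forall>q\<in>open_face (low_coords p t) (mid_coords p t) (high_coords p t). f q = 0)"
    "t = 0 \<or> c * t ^ (4 * CARD('n) * m) \<le> f p"
proof -
  let ?Z = "\<lambda>t. \<forall>q\<in>open_face (low_coords p t) (mid_coords p t) (high_coords p t). f q = 0"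
  obtain t where t: "t \<in> {0..1/2}" "t = 1/2 \<or> ?Z t"
    and gap: "t = 0 \<or> (\<exists>t'. \<not> ?Z t' \<and> t \<le> 1 - t' \<and> (\<forall>i\<in>mid_coords p t'. t \<le> p $ i \<and> t \<le> 1 - p $ i))"
    by (rule critical_threshold)
  have "c * t ^ (4 * CARD('n) * m) \<le> f p" if "t \<noteq> 0"
  proof -
    from gap \<open>t \<noteq> 0\<close> obtain t' where "\<not> ?Z t'" "t \<le> 1 - t'"
      "\<forall>i\<in>mid_coords p t'. t \<le> p $ i \<and> t \<le> 1 - p $ i"
      by blast
    then have "t ^ (4 * CARD('n)) \<le> face_weight (low_coords p t') (mid_coords p t') (high_coords p t') p"
      using t(1) by (intro face_weight_ge_power) (auto simp: low_coords_def high_coords_def)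
    then have "c * (t ^ (4 * CARD('n))) ^ m \<le> c * face_weight (low_coords p t') (mid_coords p t') (high_coords p t') p ^ m"
      using \<open>0 < c\<close> t(1) by (intro mult_left_mono power_mono) auto
    also have "\<dots> \<le> f p"
      using bound[OF is_partition3_threshold _ p] \<open>\<not> ?Z t'\<close> by blast
    finally show ?thesis
      by (simp add: power_mult)
  qed
  then show ?thesis
    using t that by blast
qed

section \<open>Bernstein factories near the zeros\<close>

definition grid_point :: "nat \<Rightarrow> ('n \<Rightarrow> nat) \<Rightarrow> real ^ 'n" where
  "grid_point N k = (\<chi> i. real (k i) / real N)"

lemma grid_point_in_unit_cube: "0 < N \<Longrightarrow> \<forall>i. k i \<le> N \<Longrightarrow> grid_point N k \<in> unit_cube"
  by (simp add: unit_cube_def grid_point_def field_simps)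

definition grid_modulus :: "(real ^ 'n::finite \<Rightarrow> real) \<Rightarrow> nat \<Rightarrow> real \<Rightarrow> bool" where
  "grid_modulus f L \<delta> \<longleftrightarrow>
     (\<forall>x\<in>unit_cube. \<forall>y\<in>unit_cube. (\<forall>i. \<bar>x $ i - y $ i\<bar> \<le> 1 / real L) \<longrightarrow> \<bar>f x - f y\<bar> < \<delta>)"

lemma unit_cube_eq_cbox: "(unit_cube :: (real ^ 'n::finite) set) = cbox 0 1"
  by (auto simp: unit_cube_def mem_box_cart)

lemma grid_modulus_exists:
  fixes f :: "real ^ 'n::finite \<Rightarrow> real"
  assumes "continuous_on unit_cube f" "0 < \<delta>"
  obtains L where "0 < L" "grid_modulus f L \<delta>"
proof -
  have "uniformly_continuous_on unit_cube f"
    using assms(1) by (intro compact_uniformly_continuous) (simp_all add: unit_cube_eq_cbox)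
  then obtain d where "0 < d"
    and d: "\<And>x y. x \<in> unit_cube \<Longrightarrow> y \<in> unit_cube \<Longrightarrow> dist y x < d \<Longrightarrow> dist (f y) (f x) < \<delta>"
    using assms(2) uniformly_continuous_onE by metis
  obtain L :: nat where L: "real CARD('n) / d < real L"
    using reals_Archimedean2 by blast
  moreover have "0 < real CARD('n) / d"
    using \<open>0 < d\<close> by simp
  ultimately have "0 < L"
    by simp
  moreover have "grid_modulus f L \<delta>"
    unfolding grid_modulus_def
  proof (intro ballI impI)
    fix x y :: "real ^ 'n"
    assume x: "x \<in> unit_cube" and y: "y \<in> unit_cube" and close: "\<forall>i. \<bar>x $ i - y $ i\<bar> \<le> 1 / real L"
    have "dist x y \<le> (\<Sum>i\<in>UNIV. \<bar>(x - y) $ i\<bar>)"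
      unfolding dist_norm by (rule norm_le_l1_cart)
    also have "\<dots> \<le> (\<Sum>i\<in>(UNIV::'n set). 1 / real L)"
      using close by (intro sum_mono) simp
    also have "\<dots> < d"
      using L \<open>0 < d\<close> \<open>0 < L\<close> by (simp add: field_simps)
    finally show "\<bar>f x - f y\<bar> < \<delta>"
      using d[OF y x] by (simp add: dist_real_def dist_commute)
  qed
  ultimately show ?thesis
    by (rule that)
qed

lemma grid_point_near_open_face:
  fixes k :: "'n::finite \<Rightarrow> nat"
  assumes part: "is_partition3 A S B" and L: "0 < L" and R: "0 < R" and kN: "\<forall>i. k i \<le> L * R"
    and low: "\<And>i. i \<in> A \<Longrightarrow> k i < R" and high: "\<And>i. i \<in> B \<Longrightarrow> L * R < k i + R"
  obtains z where "z \<in> open_face A S B" "\<forall>i. \<bar>grid_point (L * R) k $ i - z $ i\<bar> \<le> 1 / real L"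
proof -
  define N where "N = L * R"
  define Y where "Y = grid_point N k"
  define \<epsilon> where "\<epsilon> = 1 / real L"
  have "0 < \<epsilon>" "\<epsilon> \<le> 1" "real R / real N = \<epsilon>" "0 < N"
    using L R by (simp_all add: \<epsilon>_def N_def)
  have Y: "Y $ i = real (k i) / real N" "Y $ i \<in> {0..1}" for i
  proof -
    have "k i \<le> N"
      using kN by (simp add: N_def)
    then show "Y $ i = real (k i) / real N" "Y $ i \<in> {0..1}"
      using \<open>0 < N\<close> by (simp_all add: Y_def grid_point_def)
  qed
  \<comment> \<open>z rounds the coordinates in A and B and pulls the others towards 1/2 into (0, 1).\<close>
  define z where "z = (\<chi> i. if i \<in> A then 0 else if i \<in> B then 1 else (1 - \<epsilon>) * Y $ i + \<epsilon> / 2)"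
  have shrink: "(1 - \<epsilon>) * Y $ i + \<epsilon> / 2 \<in> {0<..<1}" for i
  proof -
    have "0 \<le> (1 - \<epsilon>) * Y $ i" "(1 - \<epsilon>) * Y $ i \<le> 1 - \<epsilon>"
      using \<open>\<epsilon> \<le> 1\<close> Y(2)[of i] mult_left_le[of "Y $ i" "1 - \<epsilon>"] by auto
    then show ?thesis
      using \<open>0 < \<epsilon>\<close> by simp
  qed
  have "z \<in> open_face A S B"
    using part shrink unfolding open_face_def is_partition3_def z_def by auto
  moreover have "\<bar>Y $ i - z $ i\<bar> \<le> \<epsilon>" for i
  proof -
    consider "i \<in> A" | "i \<in> B" "i \<notin> A" | "i \<notin> A" "i \<notin> B"
      by blast
    then show ?thesis
    proof cases
      case 1
      then have "real (k i) / real N \<le> real R / real N"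
        using low by (intro divide_right_mono) (simp_all add: less_imp_le)
      then show ?thesis
        using 1 Y[of i] \<open>real R / real N = \<epsilon>\<close> by (simp add: z_def)
    next
      case 2
      then have "N \<le> k i + R"
        using high by (simp add: N_def less_imp_le)
      then have "real N \<le> real (k i) + real R"
        by linarith
      then have "1 \<le> real (k i) / real N + real R / real N"
        using \<open>0 < N\<close> by (simp add: field_simps)
      then show ?thesis
        using 2 Y[of i] \<open>real R / real N = \<epsilon>\<close> by (simp add: z_def)
    next
      case 3
      then have "Y $ i - z $ i = \<epsilon> * (Y $ i - 1/2)"
        by (simp add: z_def algebra_simps)
      then have "\<bar>Y $ i - z $ i\<bar> = \<epsilon> * \<bar>Y $ i - 1/2\<bar>"
        using \<open>0 < \<epsilon>\<close> by (simp add: abs_mult)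
      also have "\<dots> \<le> \<epsilon>"
        using Y(2)[of i] \<open>0 < \<epsilon>\<close> mult_left_le[of "\<bar>Y $ i - 1/2\<bar>" \<epsilon>] by auto
      finally show ?thesis .
    qed
  qed
  ultimately show ?thesis
    by (intro that) (auto simp: Y_def N_def \<epsilon>_def)
qed

lemma grid_point_value_lt_near_zero_face:
  fixes f :: "real ^ 'n::finite \<Rightarrow> real"
  assumes part: "is_partition3 A S B" and L: "0 < L" and R: "0 < R" and kN: "\<forall>i. k i \<le> L * R"
    and low: "\<And>i. i \<in> A \<Longrightarrow> k i < R" and high: "\<And>i. i \<in> B \<Longrightarrow> L * R < k i + R"
    and modulus: "grid_modulus f L \<delta>" and zero: "\<forall>q\<in>open_face A S B. f q = 0"
  shows "f (grid_point (L * R) k) < \<delta>"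
proof -
  obtain z where z: "z \<in> open_face A S B" "\<forall>i. \<bar>grid_point (L * R) k $ i - z $ i\<bar> \<le> 1 / real L"
    by (rule grid_point_near_open_face[OF part L R kN low high])
  have "grid_point (L * R) k \<in> unit_cube" "z \<in> unit_cube"
    using kN L R z(1) open_face_subset_unit_cube[OF part] by (auto intro: grid_point_in_unit_cube)
  then have "\<bar>f (grid_point (L * R) k) - f z\<bar> < \<delta>"
    using modulus z(2) unfolding grid_modulus_def by blast
  then show ?thesis
    using zero z(1) by simp
qed

lemma bernstein_factory_le_near_zero_face:
  fixes f :: "real ^ 'n::finite \<Rightarrow> real"
  assumes part: "is_partition3 A S B" and L: "0 < L" and R: "0 < R" and p: "p \<in> unit_cube"
    and "0 \<le> t" and low: "\<And>i. i \<in> A \<Longrightarrow> p $ i \<le> t" and high: "\<And>i. i \<in> B \<Longrightarrow> 1 - p $ i \<le> t"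
    and modulus: "grid_modulus f L \<delta>" and zero: "\<forall>q\<in>open_face A S B. f q = 0"
    and h: "\<And>k. h k \<in> {0..1}" "\<And>k. f (grid_point (L * R) k) < \<delta> \<Longrightarrow> h k = 0"
  shows "factory_prob (bernstein_factory (L * R) h) p \<le> real CARD('n) * 2 ^ (L * R) * t ^ R"
proof -
  define N where "N = L * R"
  define bad where "bad i k \<longleftrightarrow> (i \<in> A \<and> R \<le> k) \<or> (i \<in> B \<and> k + R \<le> N)" for i k
  have "h k \<le> 0" if k: "\<forall>i. k i \<le> N" "\<forall>i. \<not> bad i (k i)" for k
  proof -
    have "f (grid_point (L * R) k) < \<delta>"
      by (rule grid_point_value_lt_near_zero_face[OF part L R _ _ _ modulus zero])
        (use k in \<open>auto simp: bad_def N_def\<close>)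
    then show ?thesis
      using h(2) by simp
  qed
  then have "factory_prob (bernstein_factory N h) p
      \<le> 0 + (\<Sum>i\<in>UNIV. \<Sum>k\<in>{k\<in>{..N}. bad i k}. Bernstein N k (p $ i))"
    by (intro factory_prob_bernstein_factory_le[OF p _ h(1)]) auto
  also have "\<dots> \<le> (\<Sum>i\<in>(UNIV::'n set). 2 ^ N * t ^ R)"
    unfolding add_0_left
  proof (rule sum_mono)
    fix i :: 'n
    have pi: "p $ i \<in> {0..1}"
      using p by (simp add: unit_cube_def)
    consider "i \<in> A" | "i \<in> B" | "i \<notin> A" "i \<notin> B"
      by blast
    then show "(\<Sum>k\<in>{k\<in>{..N}. bad i k}. Bernstein N k (p $ i)) \<le> 2 ^ N * t ^ R"
    proof cases
      case 1
      then have "i \<notin> B"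
        using part by (auto simp: is_partition3_def)
      then show ?thesis
        using 1 Bernstein_upper_tail_le[OF pi low[OF 1]] by (simp add: bad_def)
    next
      case 2
      then have "i \<notin> A"
        using part by (auto simp: is_partition3_def)
      then show ?thesis
        using 2 Bernstein_lower_tail_le[OF pi high[OF 2]] by (simp add: bad_def)
    next
      case 3
      then show ?thesis
        using \<open>0 \<le> t\<close> by (simp add: bad_def)
    qed
  qed
  finally show ?thesis
    by (simp add: N_def)
qed

lemma two_power_tail_le:
  fixes c t :: real and n L M R j :: nat
  assumes "0 < c" "0 < n" "0 < t" "t \<le> 1 / 2 ^ (L + 1)" "M + j \<le> R"
    and j: "(1/2::real) ^ j < 2 * c / (real n * 2 ^ (L * M))"
  shows "real n * 2 ^ (L * R) * t ^ R \<le> 2 * c * t ^ M"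
proof -
  define q where "q = 2 ^ L * t"
  have q: "0 < q" "q \<le> 1/2"
    using assms(3,4) by (simp_all add: q_def field_simps)
  have "2 ^ (L * R) * t ^ R = q ^ R"
    by (simp add: q_def power_mult power_mult_distrib)
  also have "\<dots> = q ^ M * q ^ (R - M)"
    using assms(5) by (simp flip: power_add)
  also have "\<dots> \<le> q ^ M * (1/2) ^ j"
  proof -
    have "q ^ (R - M) \<le> (1/2) ^ (R - M)"
      using q by (intro power_mono) auto
    also have "\<dots> \<le> (1/2) ^ j"
      using assms(5) by (intro power_decreasing) auto
    finally show ?thesis
      using q by (simp add: mult_left_mono)
  qed
  also have "\<dots> = 2 ^ (L * M) * t ^ M * (1/2) ^ j"
    by (simp add: q_def power_mult power_mult_distrib)
  finally have "real n * (2 ^ (L * R) * t ^ R) \<le> real n * 2 ^ (L * M) * (1/2) ^ j * t ^ M"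
    by (rule mult_left_mono[THEN order.trans]) (simp_all add: mult_ac)
  also have "\<dots> \<le> 2 * c * t ^ M"
  proof -
    have "real n * 2 ^ (L * M) * (1/2) ^ j < 2 * c"
      using j assms(2) by (simp add: field_simps)
    then show ?thesis
      using assms(3) by (intro mult_right_mono) auto
  qed
  finally show ?thesis
    by (simp add: mult.assoc)
qed

lemma bernstein_factory_le_twice_of_small:
  fixes f :: "real ^ 'n::finite \<Rightarrow> real"
  assumes "0 < c"
    and bound: "\<And>A S B p. is_partition3 A S B \<Longrightarrow> \<exists>q\<in>open_face A S B. f q \<noteq> 0 \<Longrightarrow> p \<in> unit_cube
       \<Longrightarrow> c * face_weight A S B p ^ m \<le> f p"
    and nonneg: "0 \<le> f p" and p: "p \<in> unit_cube" and L: "0 < L" and modulus: "grid_modulus f L \<delta>"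
    and h: "\<And>k. h k \<in> {0..1}" "\<And>k. f (grid_point (L * R) k) < \<delta> \<Longrightarrow> h k = 0"
    and M: "M = 4 * CARD('n) * m" and R: "M + j + 1 \<le> R"
    and j: "(1/2::real) ^ j < 2 * c / (real CARD('n) * 2 ^ (L * M))"
    and small: "f p < c * (1 / 2 ^ (L + 1)) ^ M"
  shows "factory_prob (bernstein_factory (L * R) h) p \<le> 2 * f p"
proof -
  define \<tau> :: real where "\<tau> = 1 / 2 ^ (L + 1)"
  have \<tau>: "0 < \<tau>" "\<tau> < 1/2"
    using L by (simp_all add: \<tau>_def field_simps)
  obtain t where t: "t \<in> {0..1/2}"
    and zero: "t = 1/2 \<or> (\<forall>q\<in>open_face (low_coords p t) (mid_coords p t) (high_coords p t). f q = 0)"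
    and lower: "t = 0 \<or> c * t ^ M \<le> f p"
    unfolding M by (rule poly_bounded_threshold_bound[OF \<open>0 < c\<close> bound p])
  have "t \<le> \<tau>"
  proof (rule ccontr)
    assume "\<not> t \<le> \<tau>"
    then have "c * \<tau> ^ M \<le> c * t ^ M"
      using \<open>0 < c\<close> \<tau> by (intro mult_left_mono power_mono) auto
    moreover have "c * t ^ M \<le> f p"
      using lower \<open>\<not> t \<le> \<tau>\<close> \<tau> by auto
    ultimately show False
      using small by (simp add: \<tau>_def)
  qed
  then have "\<forall>q\<in>open_face (low_coords p t) (mid_coords p t) (high_coords p t). f q = 0"
    using zero \<tau> by auto
  then have tail: "factory_prob (bernstein_factory (L * R) h) p \<le> real CARD('n) * 2 ^ (L * R) * t ^ R"
    using t R by (intro bernstein_factory_le_near_zero_face[OF is_partition3_threshold L _ p _ _ _ modulus _ h])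
      (auto simp: low_coords_def high_coords_def)
  show ?thesis
  proof (cases "t = 0")
    case True
    moreover have "0 < R"
      using R by simp
    ultimately show ?thesis
      using tail nonneg by (simp add: zero_power)
  next
    case False
    then have "real CARD('n) * 2 ^ (L * R) * t ^ R \<le> 2 * c * t ^ M"
      using \<open>0 < c\<close> t \<open>t \<le> \<tau>\<close> R j by (intro two_power_tail_le) (auto simp: \<tau>_def)
    then show ?thesis
      using tail lower False by linarith
  qed
qed

lemma bernstein_factory_le_twice_near_zeros:
  fixes f :: "real ^ 'n::finite \<Rightarrow> real"
  assumes pb: "poly_bounded f" and nonneg: "\<And>p. p \<in> unit_cube \<Longrightarrow> 0 \<le> f p"
    and L: "0 < L" and modulus: "grid_modulus f L \<delta>"
  shows "\<exists>\<kappa>>0. \<exists>R\<^sub>0. \<forall>R\<ge>R\<^sub>0. \<forall>h p. (\<forall>k. h k \<in> {0..1}) \<longrightarrow> (\<forall>k. f (grid_point (L * R) k) < \<delta> \<longrightarrow> h k = 0)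
           \<longrightarrow> p \<in> unit_cube \<longrightarrow> f p < \<kappa> \<longrightarrow> factory_prob (bernstein_factory (L * R) h) p \<le> 2 * f p"
proof -
  from pb obtain c m where "0 < c" and bound: "\<And>A S B p. is_partition3 A S B \<Longrightarrow>
      \<exists>q\<in>open_face A S B. f q \<noteq> 0 \<Longrightarrow> p \<in> unit_cube \<Longrightarrow> c * face_weight A S B p ^ m \<le> f p"
    by (rule poly_boundedE) (rule that)
  define M where "M = 4 * CARD('n) * m"
  obtain j where j: "(1/2::real) ^ j < 2 * c / (real CARD('n) * 2 ^ (L * M))"
    using real_arch_pow_inv[of "2 * c / (real CARD('n) * 2 ^ (L * M))" "1/2"] \<open>0 < c\<close> by auto
  have "0 < c * (1 / 2 ^ (L + 1)) ^ M"
    using \<open>0 < c\<close> by simp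
  with bernstein_factory_le_twice_of_small[OF \<open>0 < c\<close> bound nonneg _ L modulus _ _ M_def _ j]
  show ?thesis
    by blast
qed

section \<open>The ramp factory\<close>

definition ramp :: "real \<Rightarrow> real" where
  "ramp t = max 0 (min 1 (2 * t - 1/2))"

lemma ramp_in_unit_interval: "ramp t \<in> {0..1}"
  by (simp add: ramp_def)

lemma ramp_eq_0: "t \<le> 1/4 \<Longrightarrow> ramp t = 0"
  by (simp add: ramp_def)

lemma ramp_le_self: "0 \<le> t \<Longrightarrow> t \<le> 1/2 \<Longrightarrow> ramp t \<le> t"
  by (simp add: ramp_def)

lemma one_minus_ramp: "1 - ramp t = ramp (1 - t)"
  by (simp add: ramp_def)

lemma ramp_lipschitz: "\<bar>ramp a - ramp b\<bar> \<le> 2 * \<bar>a - b\<bar>"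
  by (simp add: ramp_def max_def min_def abs_if)

lemma le_twice_of_le_ramp_add:
  fixes g x \<kappa> :: real
  assumes "g \<le> 1" "0 \<le> \<kappa>" "\<kappa> \<le> x" "\<kappa> \<le> 1/4" "g \<le> ramp x + \<kappa>"
  shows "g \<le> 2 * x"
proof -
  consider "x \<le> 1/4" | "1/4 < x" "x \<le> 1/2" | "1/2 < x"
    by linarith
  then show ?thesis
  proof cases
    case 1
    then show ?thesis
      using assms ramp_eq_0[of x] by simp
  next
    case 2
    then show ?thesis
      using assms ramp_le_self[of x] by simp
  next
    case 3
    then show ?thesis
      using assms by simp
  qed
qed

definition ramp_factory :: "nat \<Rightarrow> (real ^ 'n::finite \<Rightarrow> real) \<Rightarrow> 'n factory" where
  "ramp_factory N f = bernstein_factory N (\<lambda>k. ramp (f (grid_point N k)))"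

lemma bernstein_factory_le_local_bound:
  fixes p :: "real ^ 'n::finite"
  assumes p: "p \<in> unit_cube" and N: "0 < N" and d: "0 < d" and "0 \<le> a" "0 < \<epsilon>"
    and h: "\<And>k. h k \<in> {0..1}"
    and near: "\<And>k. \<forall>i. k i \<le> N \<Longrightarrow> \<forall>i. \<bar>grid_point N k $ i - p $ i\<bar> < d \<Longrightarrow> h k \<le> a + \<epsilon> / 2"
    and large: "real CARD('n) \<le> 2 * \<epsilon> * d\<^sup>2 * real N"
  shows "factory_prob (bernstein_factory N h) p \<le> a + \<epsilon>"
proof -
  have "factory_prob (bernstein_factory N h) p \<le> (a + \<epsilon> / 2)
      + (\<Sum>i\<in>UNIV. \<Sum>k\<in>{k\<in>{..N}. d \<le> \<bar>real k / real N - p $ i\<bar>}. Bernstein N k (p $ i))"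
    using near \<open>0 \<le> a\<close> \<open>0 < \<epsilon>\<close>
    by (intro factory_prob_bernstein_factory_le[OF p _ h]) (auto simp: grid_point_def not_le)
  also have "(\<Sum>i\<in>UNIV. \<Sum>k\<in>{k\<in>{..N}. d \<le> \<bar>real k / real N - p $ i\<bar>}. Bernstein N k (p $ i))
      \<le> (\<Sum>i\<in>(UNIV::'n set). 1 / (4 * real N * d\<^sup>2))"
    using p by (intro sum_mono Bernstein_far_sum_le d N) (simp add: unit_cube_def)
  also have "\<dots> \<le> \<epsilon> / 2"
    using large d N \<open>0 < \<epsilon>\<close> by (simp add: field_simps)
  finally show ?thesis
    by simp
qed

lemma ramp_factory_le_ramp_add:
  fixes f :: "real ^ 'n::finite \<Rightarrow> real"
  assumes p: "p \<in> unit_cube" and "0 < N" "0 < \<epsilon>" "0 < L" and modulus: "grid_modulus f L (\<epsilon> / 4)"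
    and large: "real CARD('n) \<le> 2 * \<epsilon> * (1 / real L)\<^sup>2 * real N"
  shows "factory_prob (ramp_factory N f) p \<le> ramp (f p) + \<epsilon>"
  unfolding ramp_factory_def
proof (rule bernstein_factory_le_local_bound[OF p \<open>0 < N\<close> _ _ \<open>0 < \<epsilon>\<close> ramp_in_unit_interval _ large])
  show "0 < 1 / real L" "0 \<le> ramp (f p)"
    using \<open>0 < L\<close> ramp_in_unit_interval[of "f p"] by simp_all
  fix k
  assume k: "\<forall>i. k i \<le> N" "\<forall>i. \<bar>grid_point N k $ i - p $ i\<bar> < 1 / real L"
  have "grid_point N k \<in> unit_cube"
    using \<open>0 < N\<close> k(1) by (rule grid_point_in_unit_cube)
  then have "\<bar>f (grid_point N k) - f p\<bar> < \<epsilon> / 4"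
    using modulus p k(2) unfolding grid_modulus_def by (simp add: less_imp_le)
  then show "ramp (f (grid_point N k)) \<le> ramp (f p) + \<epsilon> / 2"
    using ramp_lipschitz[of "f (grid_point N k)" "f p"] by argo
qed

lemma ramp_factory_le_twice:
  fixes f :: "real ^ 'n::finite \<Rightarrow> real"
  assumes cont: "continuous_on unit_cube f" and range: "\<And>p. p \<in> unit_cube \<Longrightarrow> f p \<in> {0..1}"
    and pb: "poly_bounded f" and L: "0 < L" and modulus: "grid_modulus f L (1/4)"
  obtains R0 where "\<And>R p. R0 \<le> R \<Longrightarrow> p \<in> unit_cube \<Longrightarrow> factory_prob (ramp_factory (L * R) f) p \<le> 2 * f p"
proof -
  have nonneg: "\<And>p. p \<in> unit_cube \<Longrightarrow> 0 \<le> f p"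
    using range by simp
  obtain \<kappa>\<^sub>z R\<^sub>z where "0 < \<kappa>\<^sub>z" and near_zero: "\<forall>R\<ge>R\<^sub>z. \<forall>h p. (\<forall>k. h k \<in> {0..1})
      \<longrightarrow> (\<forall>k. f (grid_point (L * R) k) < 1/4 \<longrightarrow> h k = 0) \<longrightarrow> p \<in> unit_cube \<longrightarrow> f p < \<kappa>\<^sub>z
      \<longrightarrow> factory_prob (bernstein_factory (L * R) h) p \<le> 2 * f p"
    using bernstein_factory_le_twice_near_zeros[OF pb nonneg L modulus] by blast
  define \<kappa> where "\<kappa> = min \<kappa>\<^sub>z (1/4)"
  have "0 < \<kappa>"
    using \<open>0 < \<kappa>\<^sub>z\<close> by (simp add: \<kappa>_def)
  then obtain L' where "0 < L'" and modulus': "grid_modulus f L' (\<kappa> / 4)"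
    using grid_modulus_exists[OF cont, of "\<kappa> / 4"] by auto
  define R1 where "R1 = max R\<^sub>z (nat \<lceil>real CARD('n) * (real L')\<^sup>2 / (2 * \<kappa>)\<rceil> + 1)"
  have "factory_prob (ramp_factory (L * R) f) p \<le> 2 * f p" if "R1 \<le> R" and p: "p \<in> unit_cube" for R p
  proof -
    define N where "N = L * R"
    define g where "g = factory_prob (ramp_factory N f) p"
    have "R\<^sub>z \<le> R" "0 < R" "real CARD('n) * (real L')\<^sup>2 / (2 * \<kappa>) \<le> real R"
      using \<open>R1 \<le> R\<close> unfolding R1_def by linarith+
    moreover have "R \<le> N"
      using mult_le_mono1[of 1 L R] L by (simp add: N_def)
    ultimately have "0 < N" "real CARD('n) * (real L')\<^sup>2 / (2 * \<kappa>) \<le> real N"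
      by simp_all
    then have large: "real CARD('n) \<le> 2 * \<kappa> * (1 / real L')\<^sup>2 * real N"
      using \<open>0 < \<kappa>\<close> \<open>0 < L'\<close> by (simp add: field_simps)
    have "g \<le> 1"
      using factory_prob_in_unit_interval[OF valid_bernstein_factory p] by (simp add: g_def ramp_factory_def)
    have "g \<le> 2 * f p"
    proof (cases "f p < \<kappa>\<^sub>z")
      case True
      show ?thesis
        unfolding g_def ramp_factory_def N_def
        by (rule near_zero[rule_format, OF \<open>R\<^sub>z \<le> R\<close> ramp_in_unit_interval _ p True]) (simp add: ramp_eq_0)
    next
      case False
      have "g \<le> ramp (f p) + \<kappa>"
        unfolding g_def using p \<open>0 < N\<close> \<open>0 < \<kappa>\<close> \<open>0 < L'\<close> modulus' large by (rule ramp_factory_le_ramp_add)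
      with False \<open>g \<le> 1\<close> \<open>0 < \<kappa>\<close> show ?thesis
        by (intro le_twice_of_le_ramp_add) (auto simp: \<kappa>_def)
    qed
    then show ?thesis
      by (simp add: g_def N_def)
  qed
  then show ?thesis
    by (rule that)
qed

lemma finite_factory_within_factor_two:
  fixes f :: "real ^ 'n::finite \<Rightarrow> real"
  assumes cont: "continuous_on unit_cube f" and range: "f ` unit_cube \<subseteq> {0..1}"
    and pb: "poly_bounded f" and pb': "poly_bounded (\<lambda>p. 1 - f p)"
  obtains g where "finite_factory_implementable g" "continuous_on unit_cube g"
    "\<And>p. p \<in> unit_cube \<Longrightarrow> g p \<in> {0..1}" "\<And>p. p \<in> unit_cube \<Longrightarrow> g p \<le> 2 * f p"
    "\<And>p. p \<in> unit_cube \<Longrightarrow> 1 - g p \<le> 2 * (1 - f p)"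
proof -
  have range': "f p \<in> {0..1}" "1 - f p \<in> {0..1}" if "p \<in> unit_cube" for p
    using range that by auto
  have cont': "continuous_on unit_cube (\<lambda>p. 1 - f p)"
    using cont by (intro continuous_intros)
  obtain L where "0 < L" and modulus: "grid_modulus f L (1/4)"
    using grid_modulus_exists[OF cont, of "1/4"] by auto
  then have modulus': "grid_modulus (\<lambda>p. 1 - f p) L (1/4)"
    by (simp add: grid_modulus_def abs_minus_commute)
  obtain R1 where R1: "\<And>R p. R1 \<le> R \<Longrightarrow> p \<in> unit_cube \<Longrightarrow> factory_prob (ramp_factory (L * R) f) p \<le> 2 * f p"
    using ramp_factory_le_twice[OF cont range'(1) pb \<open>0 < L\<close> modulus] by blast
  obtain R2 where R2: "\<And>R p. R2 \<le> R \<Longrightarrow> p \<in> unit_cube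
      \<Longrightarrow> factory_prob (ramp_factory (L * R) (\<lambda>p. 1 - f p)) p \<le> 2 * (1 - f p)"
    using ramp_factory_le_twice[OF cont' range'(2) pb' \<open>0 < L\<close> modulus'] by blast
  define g where "g = factory_prob (ramp_factory (L * max R1 R2) f)"
  have compl: "1 - g p = factory_prob (ramp_factory (L * max R1 R2) (\<lambda>p. 1 - f p)) p" for p
    unfolding g_def ramp_factory_def one_minus_ramp[symmetric]
    by (rule factory_prob_bernstein_factory_compl[symmetric]) (rule ramp_in_unit_interval)
  show ?thesis
  proof (rule that)
    show "finite_factory_implementable g"
      unfolding finite_factory_implementable_def g_def ramp_factory_def
      using valid_bernstein_factory by blast
    show "continuous_on unit_cube g"
      unfolding g_def by (rule continuous_on_factory_prob)
    fix p :: "real ^ 'n"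
    assume p: "p \<in> unit_cube"
    show "g p \<in> {0..1}"
      unfolding g_def ramp_factory_def by (rule factory_prob_in_unit_interval[OF valid_bernstein_factory p])
    show "g p \<le> 2 * f p"
      unfolding g_def by (rule R1[OF _ p]) simp
    show "1 - g p \<le> 2 * (1 - f p)"
      unfolding compl by (rule R2[OF _ p]) simp
  qed
qed

theorem lemma6:
  fixes f :: "real ^ 'n \<Rightarrow> real"
  assumes "continuous_on unit_cube f"
    and "f ` unit_cube \<subseteq> {0..1}"
    and "poly_bounded f"
    and "poly_bounded (\<lambda>p. 1 - f p)"
  shows "\<exists>g :: real ^ 'n \<Rightarrow> real.
           g ` unit_cube \<subseteq> {0..1} \<and> finite_factory_implementable g \<and>
           (let ft = (\<lambda>p. 4/3 * (f p - 1/4 * g p)) in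
              ft ` unit_cube \<subseteq> {0..1} \<and> continuous_on unit_cube ft \<and>
              poly_bounded ft \<and> poly_bounded (\<lambda>p. 1 - ft p))"
proof -
  obtain g where impl: "finite_factory_implementable g" and cont: "continuous_on unit_cube g"
    and range: "\<And>p. p \<in> unit_cube \<Longrightarrow> g p \<in> {0..1}"
    and below: "\<And>p. p \<in> unit_cube \<Longrightarrow> g p \<le> 2 * f p"
    and above: "\<And>p. p \<in> unit_cube \<Longrightarrow> 1 - g p \<le> 2 * (1 - f p)"
    using finite_factory_within_factor_two[OF assms] by blast
  define ft where "ft p = 4/3 * (f p - 1/4 * g p)" for p
  have ft_ge: "2/3 * f p \<le> ft p" if "p \<in> unit_cube" for p
    using below[OF that] unfolding ft_def by (simp add: algebra_simps)
  have one_minus_ft_ge: "2/3 * (1 - f p) \<le> 1 - ft p" if "p \<in> unit_cube" for p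
    using above[OF that] unfolding ft_def by (simp add: field_simps)
  have "ft ` unit_cube \<subseteq> {0..1}"
    using ft_ge one_minus_ft_ge assms(2) by fastforce
  moreover have "continuous_on unit_cube ft"
    unfolding ft_def using assms(1) cont by (intro continuous_intros)
  moreover have "poly_bounded ft"
    using ft_ge below range
    by (intro poly_bounded_of_lower_bound[OF assms(3), of "2/3"]) (force simp: ft_def)+
  moreover have "poly_bounded (\<lambda>p. 1 - ft p)"
    using one_minus_ft_ge above range
    by (intro poly_bounded_of_lower_bound[OF assms(4), of "2/3"]) (force simp: ft_def)+
  ultimately show ?thesis
    using impl range unfolding ft_def[abs_def] Let_def by blast
qed

end
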